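(* Let $k,s,d$ be positive integers and let $\alpha,\beta\ge0$ be reals. For a sequence $e=(e_1,\dots,e_k)\in[s+1]^k$ define $c(i,j)=|\{\ell\le j: e_\ell=i\}|$ for $i\in[s+1]$, $j\in[k]$, and $$F^*(e)=\sum_{j=1}^k\min\Big\{\big(d-\max_{i\in[s+1]\setminus\{e_j\}}c(i,j)\big)\beta,\ \alpha\Big\}.$$ Then for every $e\in[s+1]^k$ there exists $e'\in[2]^k$ with $F^*(e')\le F^*(e)$ (where $F^*(e')$ is computed by the same formula, viewing $e'$ as an element of $[s+1]^k$).
   Context: $[a]=\{1,\dots,a\}$. *)

theory Defs
  imports Complex_Main
begin

text \<open>Sequences e = (e_1,...,e_k) are represented as functions nat => nat; only the
values at 1..k matter.\<close>

definition cnt :: "(nat \<Rightarrow> nat) \<Rightarrow> nat \<Rightarrow> nat \<Rightarrow> nat" where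
  "cnt e i j = card {l \<in> {1..j}. e l = i}"

definition Fstar :: "nat \<Rightarrow> nat \<Rightarrow> nat \<Rightarrow> real \<Rightarrow> real \<Rightarrow> (nat \<Rightarrow> nat) \<Rightarrow> real" where
  "Fstar k s d \<alpha> \<beta> e =
     (\<Sum>j=1..k. min ((real d - real (Max ((\<lambda>i. cnt e i j) ` ({1..s+1} - {e j})))) * \<beta>) \<alpha>)"

end

theory Submission
  imports Defs
begin

text \<open>Replace each letter \<open>e\<^sub>j\<close> by 1 if, just before step \<open>j\<close>, it is a leader (its count
  equals the maximal count \<open>m\<close>), and by 2 otherwise. By induction the new sequence contains
  exactly \<open>m\<close> ones and \<open>p - m\<close> twos among its first \<open>p\<close> letters. At step \<open>j\<close> every rival of
  a leader \<open>e\<^sub>j\<close> has count at most \<open>p - m\<close>, the count of the rival letter 2; every rival of a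
  non-leader has count at most \<open>m\<close>, the count of the rival letter 1. So the largest rival
  count never decreases, and each summand of \<open>F\<^sup>*\<close> can only become smaller.\<close>

lemma cnt_0 [simp]: "cnt e i 0 = 0"
  unfolding cnt_def by simp

lemma cnt_Suc: "cnt e i (Suc p) = cnt e i p + (if e (Suc p) = i then 1 else 0)"
proof -
  have "{l \<in> {1..Suc p}. e l = i} =
      {l \<in> {1..p}. e l = i} \<union> (if e (Suc p) = i then {Suc p} else {})"
    by (auto simp: le_Suc_eq)
  then show ?thesis
    unfolding cnt_def by (auto simp: card_insert_if)
qed

lemma cnt_add_cnt_le:
  assumes "i \<noteq> v"
  shows "cnt e i p + cnt e v p \<le> p"
proof -
  have "cnt e i p + cnt e v p = card ({l \<in> {1..p}. e l = i} \<union> {l \<in> {1..p}. e l = v})"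
    unfolding cnt_def using assms by (subst card_Un_disjoint) auto
  also have "\<dots> \<le> card {1..p}"
    by (rule card_mono) auto
  finally show ?thesis by simp
qed

definition max_cnt :: "nat \<Rightarrow> (nat \<Rightarrow> nat) \<Rightarrow> nat \<Rightarrow> nat" where
  "max_cnt s e p = Max ((\<lambda>i. cnt e i p) ` {1..s+1})"

lemma cnt_le_max_cnt: "i \<in> {1..s+1} \<Longrightarrow> cnt e i p \<le> max_cnt s e p"
  unfolding max_cnt_def by (rule Max_ge) auto

lemma max_cnt_0 [simp]: "max_cnt s e 0 = 0"
  unfolding max_cnt_def by (rule Max_eqI) auto

lemma max_cnt_attained:
  obtains i where "i \<in> {1..s+1}" "cnt e i p = max_cnt s e p"
proof -
  have "max_cnt s e p \<in> (\<lambda>i. cnt e i p) ` {1..s+1}"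
    unfolding max_cnt_def by (rule Max_in) auto
  then show ?thesis using that by auto
qed

lemma max_cnt_Suc:
  assumes "e (Suc p) \<in> {1..s+1}"
  shows "max_cnt s e (Suc p) =
    max_cnt s e p + (if cnt e (e (Suc p)) p = max_cnt s e p then 1 else 0)"
    (is "_ = ?m")
proof -
  let ?v = "e (Suc p)"
  have "i0 \<in> {1..s+1} \<Longrightarrow> cnt e i0 p = max_cnt s e p \<Longrightarrow>
      ?m \<in> (\<lambda>i. cnt e i (Suc p)) ` {1..s+1}" for i0
    using assms by (cases "cnt e ?v p = max_cnt s e p")
      (auto simp: cnt_Suc intro: image_eqI[of _ _ ?v] image_eqI[of _ _ i0])
  then have "?m \<in> (\<lambda>i. cnt e i (Suc p)) ` {1..s+1}"
    by (metis max_cnt_attained)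
  moreover have "cnt e i (Suc p) \<le> ?m" if "i \<in> {1..s+1}" for i
    using cnt_le_max_cnt[OF that, of e p] cnt_le_max_cnt[OF assms, of e p]
    by (auto simp: cnt_Suc)
  ultimately show ?thesis
    unfolding max_cnt_def[of s e "Suc p"] by (intro Max_eqI) auto
qed

definition leader_seq :: "nat \<Rightarrow> (nat \<Rightarrow> nat) \<Rightarrow> nat \<Rightarrow> nat" where
  "leader_seq s e j = (if cnt e (e j) (j - 1) = max_cnt s e (j - 1) then 1 else 2)"

lemma leader_seq_range: "leader_seq s e j \<in> {1..2}"
  by (simp add: leader_seq_def)

lemma cnt_leader_seq_1:
  assumes "\<forall>j\<in>{1..k}. e j \<in> {1..s+1}" "p \<le> k"
  shows "cnt (leader_seq s e) 1 p = max_cnt s e p"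
  using assms(2)
proof (induction p)
  case (Suc p)
  then have "e (Suc p) \<in> {1..s+1}" using assms(1) by auto
  with Suc show ?case by (simp add: cnt_Suc max_cnt_Suc leader_seq_def)
qed simp

lemma cnt_leader_seq_1_add_2: "cnt (leader_seq s e) 1 p + cnt (leader_seq s e) 2 p = p"
  by (induction p) (simp_all add: cnt_Suc leader_seq_def)

definition rival_cnt :: "nat \<Rightarrow> (nat \<Rightarrow> nat) \<Rightarrow> nat \<Rightarrow> nat" where
  "rival_cnt s e j = Max ((\<lambda>i. cnt e i j) ` ({1..s+1} - {e j}))"

lemma cnt_le_rival_cnt: "i \<in> {1..s+1} \<Longrightarrow> i \<noteq> e j \<Longrightarrow> cnt e i j \<le> rival_cnt s e j"
  unfolding rival_cnt_def by (rule Max_ge) auto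

lemma rival_cnt_le:
  assumes "s > 0" "\<And>i. i \<in> {1..s+1} \<Longrightarrow> i \<noteq> e j \<Longrightarrow> cnt e i j \<le> c"
  shows "rival_cnt s e j \<le> c"
proof -
  have "(if e j = 1 then 2 else 1) \<in> {1..s+1} - {e j}"
    using assms(1) by auto
  then show ?thesis
    unfolding rival_cnt_def using assms(2) by (subst Max_le_iff) auto
qed

lemma rival_cnt_le_leader_seq:
  assumes "s > 0" "\<forall>j\<in>{1..k}. e j \<in> {1..s+1}" "j \<in> {1..k}"
  shows "rival_cnt s e j \<le> rival_cnt s (leader_seq s e) j"
proof -
  let ?e' = "leader_seq s e"
  obtain p where p: "j = Suc p" and "p \<le> k"
    using assms(3) by (cases j) auto
  have ones: "cnt ?e' 1 j = max_cnt s e p" if "?e' j = 2"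
    using that cnt_leader_seq_1[OF assms(2) \<open>p \<le> k\<close>] p by (simp add: cnt_Suc)
  have twos: "cnt ?e' 2 j = p - max_cnt s e p" if "?e' j = 1"
    using that cnt_leader_seq_1[OF assms(2) \<open>p \<le> k\<close>] cnt_leader_seq_1_add_2[of s e p] p
    by (simp add: cnt_Suc)
  obtain b where b: "b \<in> {1,2}" "b \<noteq> ?e' j"
    and rivals: "\<And>i. i \<in> {1..s+1} \<Longrightarrow> i \<noteq> e j \<Longrightarrow> cnt e i j \<le> cnt ?e' b j"
  proof (cases "cnt e (e j) p = max_cnt s e p")
    case True
    then have "?e' j = 1" using p by (simp add: leader_seq_def)
    have "cnt e i j \<le> cnt ?e' 2 j" if "i \<noteq> e j" for i
      using cnt_add_cnt_le[OF that, where e = e and p = p] that True twos[OF \<open>?e' j = 1\<close>] p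
      by (simp add: cnt_Suc)
    with \<open>?e' j = 1\<close> show ?thesis using that[of 2] by simp
  next
    case False
    then have "?e' j = 2" using p by (simp add: leader_seq_def)
    have "cnt e i j \<le> cnt ?e' 1 j" if "i \<in> {1..s+1}" "i \<noteq> e j" for i
      using cnt_le_max_cnt[OF that(1), of e p] ones[OF \<open>?e' j = 2\<close>] that(2) p
      by (simp add: cnt_Suc)
    with \<open>?e' j = 2\<close> show ?thesis using that[of 1] by simp
  qed
  have "rival_cnt s e j \<le> cnt ?e' b j"
    by (rule rival_cnt_le[OF assms(1) rivals])
  also have "\<dots> \<le> rival_cnt s ?e' j"
    using b assms(1) by (intro cnt_le_rival_cnt) auto
  finally show ?thesis .
qed

lemma Fstar_mono_rival_cnt:
  assumes "\<beta> \<ge> 0" "\<And>j. j \<in> {1..k} \<Longrightarrow> rival_cnt s e j \<le> rival_cnt s e' j"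
  shows "Fstar k s d \<alpha> \<beta> e' \<le> Fstar k s d \<alpha> \<beta> e"
  unfolding Fstar_def rival_cnt_def[symmetric]
proof (rule sum_mono)
  fix j assume "j \<in> {1..k}"
  then have "(real d - real (rival_cnt s e' j)) * \<beta> \<le> (real d - real (rival_cnt s e j)) * \<beta>"
    using assms by (intro mult_right_mono) auto
  then show "min ((real d - real (rival_cnt s e' j)) * \<beta>) \<alpha>
      \<le> min ((real d - real (rival_cnt s e j)) * \<beta>) \<alpha>"
    by (rule min.mono) simp
qed

theorem lemma1:
  fixes k s d :: nat and \<alpha> \<beta> :: real and e :: "nat \<Rightarrow> nat"
  assumes "k > 0" "s > 0" "d > 0" "\<alpha> \<ge> 0" "\<beta> \<ge> 0"
    and "\<forall>j\<in>{1..k}. e j \<in> {1..s+1}"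
  shows "\<exists>e'. (\<forall>j\<in>{1..k}. e' j \<in> {1..2}) \<and> Fstar k s d \<alpha> \<beta> e' \<le> Fstar k s d \<alpha> \<beta> e"
proof (intro exI conjI)
  show "\<forall>j\<in>{1..k}. leader_seq s e j \<in> {1..2}"
    using leader_seq_range by blast
  show "Fstar k s d \<alpha> \<beta> (leader_seq s e) \<le> Fstar k s d \<alpha> \<beta> e"
    using assms(5) rival_cnt_le_leader_seq[OF assms(2) assms(6)]
    by (rule Fstar_mono_rival_cnt)
qed

end
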